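(* Let $M$ be a simple binary matroid of rank $r+1$. Then $\operatorname{si}(M/e)\cong PG(r-1,2)$ for all $e\in E(M)$ if and only if $M$ is isomorphic to the matroid obtained from $PG(r,2)$ by deleting the elements of a rank-$(r-i)$ flat, for some $i\in\{0,1,\dots,r\}$.
   Context: $\operatorname{si}$ denotes simplification. $PG(r,2)$ is the binary projective geometry of rank $r+1$; the matroid obtained by deleting a rank-$(r-i)$ flat from it does not depend on the choice of that flat (the rank-$0$ flat is empty). *)

theory Defs
  imports Main
begin

type_synonym 'a matroid = "'a set \<times> ('a set \<Rightarrow> bool)"

definition ground :: "'a matroid \<Rightarrow> 'a set" where
  "ground M = fst M"

definition indep :: "'a matroid \<Rightarrow> 'a set \<Rightarrow> bool" where
  "indep M = snd M"

definition matroid :: "'a matroid \<Rightarrow> bool" where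
  "matroid M \<longleftrightarrow>
     finite (ground M) \<and>
     indep M {} \<and>
     (\<forall>X. indep M X \<longrightarrow> X \<subseteq> ground M) \<and>
     (\<forall>X Y. indep M X \<and> Y \<subseteq> X \<longrightarrow> indep M Y) \<and>
     (\<forall>X Y. indep M X \<and> indep M Y \<and> card X < card Y \<longrightarrow>
        (\<exists>y\<in>Y - X. indep M (insert y X)))"

definition rk :: "'a matroid \<Rightarrow> 'a set \<Rightarrow> nat" where
  "rk M X = Max {card Y | Y. Y \<subseteq> X \<and> indep M Y}"

definition rank :: "'a matroid \<Rightarrow> nat" where
  "rank M = rk M (ground M)"

definition flat :: "'a matroid \<Rightarrow> 'a set \<Rightarrow> bool" where
  "flat M F \<longleftrightarrow> F \<subseteq> ground M \<and> (\<forall>x \<in> ground M - F. rk M (insert x F) > rk M F)"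

definition loop :: "'a matroid \<Rightarrow> 'a \<Rightarrow> bool" where
  "loop M x \<longleftrightarrow> x \<in> ground M \<and> \<not> indep M {x}"

definition simple :: "'a matroid \<Rightarrow> bool" where
  "simple M \<longleftrightarrow> (\<forall>x\<in>ground M. \<forall>y\<in>ground M. indep M {x, y})"

definition restrict :: "'a matroid \<Rightarrow> 'a set \<Rightarrow> 'a matroid" where
  "restrict M S = (S \<inter> ground M, \<lambda>X. X \<subseteq> S \<and> indep M X)"

definition delete :: "'a matroid \<Rightarrow> 'a set \<Rightarrow> 'a matroid" where
  "delete M F = restrict M (ground M - F)"

definition contract :: "'a matroid \<Rightarrow> 'a \<Rightarrow> 'a matroid" where
  "contract M e = (ground M - {e},
     \<lambda>X. e \<notin> X \<and> (if loop M e then indep M X else indep M (insert e X)))"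

text \<open>S is the ground set of a simplification of N: S consists of non-loops and
  contains exactly one element of each parallel class of N.\<close>
definition parallel :: "'a matroid \<Rightarrow> 'a \<Rightarrow> 'a \<Rightarrow> bool" where
  "parallel N x y \<longleftrightarrow> x \<in> ground N \<and> y \<in> ground N \<and> \<not> loop N x \<and> \<not> loop N y \<and>
     \<not> indep N {x, y}"

definition is_simplification :: "'a matroid \<Rightarrow> 'a set \<Rightarrow> bool" where
  "is_simplification N S \<longleftrightarrow> S \<subseteq> ground N \<and> (\<forall>s\<in>S. \<not> loop N s) \<and>
     (\<forall>x\<in>ground N. \<not> loop N x \<longrightarrow> (\<exists>!s. s \<in> S \<and> (s = x \<or> parallel N s x)))"

definition iso :: "'a matroid \<Rightarrow> 'b matroid \<Rightarrow> bool" where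
  "iso M N \<longleftrightarrow> (\<exists>f. bij_betw f (ground M) (ground N) \<and>
     (\<forall>X. X \<subseteq> ground M \<longrightarrow> (indep M X \<longleftrightarrow> indep N (f ` X))))"

text \<open>Vectors over GF(2) are encoded as sets of natural numbers (their supports);
  the sum of a finite family is the coordinatewise parity.\<close>
definition gf2_sum :: "('a \<Rightarrow> nat set) \<Rightarrow> 'a set \<Rightarrow> nat set" where
  "gf2_sum \<phi> Y = {n. odd (card {y \<in> Y. n \<in> \<phi> y})}"

definition gf2_indep :: "('a \<Rightarrow> nat set) \<Rightarrow> 'a set \<Rightarrow> bool" where
  "gf2_indep \<phi> X \<longleftrightarrow> finite X \<and> inj_on \<phi> X \<and>
     (\<forall>Y. Y \<subseteq> X \<and> Y \<noteq> {} \<longrightarrow> gf2_sum \<phi> Y \<noteq> {})"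

definition binary :: "'a matroid \<Rightarrow> bool" where
  "binary M \<longleftrightarrow> (\<exists>\<phi> :: 'a \<Rightarrow> nat set.
     \<forall>X. X \<subseteq> ground M \<longrightarrow> (indep M X \<longleftrightarrow> gf2_indep \<phi> X))"

text \<open>PG_rank k is the binary projective geometry of rank k, i.e. PG(k-1,2):
  the nonzero vectors of GF(2)^k with linear independence.\<close>
definition PG_rank :: "nat \<Rightarrow> nat set matroid" where
  "PG_rank k = ({v. v \<subseteq> {..<k} \<and> v \<noteq> {}},
     \<lambda>X. X \<subseteq> {v. v \<subseteq> {..<k} \<and> v \<noteq> {}} \<and> gf2_indep id X)"

end

theory Submission
  imports Defs
begin

(*
  A simple binary matroid M of rank r + 1 is, up to isomorphism, a set P of points of
  PG(r,2), i.e. of nonzero vectors of GF(2)^(r+1).  Contracting the element at a point p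
  amounts to projecting from p: a linear surjection GF(2)^(r+1) -> GF(2)^r with kernel
  {0, p} represents M/e, and the parallel classes of M/e are its fibres {u, u + p}.  Hence
  si(M/e) is isomorphic to PG(r-1,2) exactly when every line {p, u, u + p} through p meets P
  in a second point.  This holds for every p in P iff the complement of P is closed under
  sums of distinct points, i.e. is a flat of PG(r,2); the flat is proper because P is not
  empty.
*)

section \<open>Sums and independence over GF(2)\<close>

definition gf2_add :: "'a set \<Rightarrow> 'a set \<Rightarrow> 'a set" (infixl "\<oplus>" 65) where
  "a \<oplus> b = (a - b) \<union> (b - a)"

lemma gf2_add_self [simp]: "a \<oplus> a = {}"
  and gf2_add_empty [simp]: "a \<oplus> {} = a" "{} \<oplus> a = a"
  and gf2_add_eq_empty_iff [simp]: "a \<oplus> b = {} \<longleftrightarrow> a = b"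
  and gf2_add_cancel [simp]: "a \<oplus> (a \<oplus> b) = b" "(a \<oplus> b) \<oplus> b = a" "(a \<oplus> b) \<oplus> a = b" "b \<oplus> (a \<oplus> b) = a"
  by (auto simp: gf2_add_def)

lemma gf2_add_eq_self_iff [simp]:
  "a \<oplus> b = a \<longleftrightarrow> b = {}" "a \<oplus> b = b \<longleftrightarrow> a = {}"
  "a = a \<oplus> b \<longleftrightarrow> b = {}" "b = a \<oplus> b \<longleftrightarrow> a = {}"
  by (auto simp: gf2_add_def)

lemma gf2_add_eq_iff: "a \<oplus> b = c \<longleftrightarrow> b = a \<oplus> c"
  by (auto simp: gf2_add_def)

lemma gf2_add_subset: "a \<subseteq> K \<Longrightarrow> b \<subseteq> K \<Longrightarrow> a \<oplus> b \<subseteq> K"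
  by (auto simp: gf2_add_def)

lemma gf2_sum_empty [simp]: "gf2_sum \<phi> {} = {}"
  by (simp add: gf2_sum_def)

lemma gf2_sum_insert:
  assumes "finite Y" "y \<notin> Y"
  shows "gf2_sum \<phi> (insert y Y) = \<phi> y \<oplus> gf2_sum \<phi> Y"
proof -
  have "card {z \<in> insert y Y. n \<in> \<phi> z} = card {z \<in> Y. n \<in> \<phi> z} + (if n \<in> \<phi> y then 1 else 0)"
    for n
  proof (cases "n \<in> \<phi> y")
    case True
    then have "{z \<in> insert y Y. n \<in> \<phi> z} = insert y {z \<in> Y. n \<in> \<phi> z}" by auto
    then show ?thesis using True assms by simp
  next
    case False
    then have "{z \<in> insert y Y. n \<in> \<phi> z} = {z \<in> Y. n \<in> \<phi> z}" by auto
    then show ?thesis using False by simp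
  qed
  then show ?thesis by (auto simp: gf2_sum_def gf2_add_def)
qed

lemma gf2_sum_singleton [simp]: "gf2_sum \<phi> {y} = \<phi> y"
  using gf2_sum_insert[of "{}" y \<phi>] by simp

lemma gf2_sum_doubleton: "x \<noteq> y \<Longrightarrow> gf2_sum \<phi> {x, y} = \<phi> x \<oplus> \<phi> y"
  using gf2_sum_insert[of "{y}" x \<phi>] by simp

lemma gf2_sum_cong:
  assumes "\<And>y. y \<in> Y \<Longrightarrow> \<phi> y = \<psi> y"
  shows "gf2_sum \<phi> Y = gf2_sum \<psi> Y"
proof -
  have "{y \<in> Y. n \<in> \<phi> y} = {y \<in> Y. n \<in> \<psi> y}" for n
    using assms by auto
  then show ?thesis by (simp add: gf2_sum_def)
qed

lemma gf2_sum_reindex: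
  assumes "inj_on \<psi> Y"
  shows "gf2_sum \<phi> (\<psi> ` Y) = gf2_sum (\<lambda>y. \<phi> (\<psi> y)) Y"
proof -
  have "{v \<in> \<psi> ` Y. n \<in> \<phi> v} = \<psi> ` {y \<in> Y. n \<in> \<phi> (\<psi> y)}" for n
    by auto
  moreover have "inj_on \<psi> {y \<in> Y. n \<in> \<phi> (\<psi> y)}" for n
    using assms by (auto intro: inj_on_subset)
  ultimately show ?thesis by (simp add: gf2_sum_def card_image)
qed

lemma odd_card_gf2_add:
  assumes "finite A" "finite B"
  shows "odd (card (A \<oplus> B)) \<longleftrightarrow> odd (card A) \<noteq> odd (card B)"
proof -
  have "A \<oplus> B = (A \<union> B) - (A \<inter> B)" by (auto simp: gf2_add_def)
  then have "card (A \<oplus> B) = card (A \<union> B) - card (A \<inter> B)"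
    using assms by (simp only:) (intro card_Diff_subset, auto)
  moreover have "card (A \<inter> B) \<le> card (A \<union> B)"
    using assms by (intro card_mono) auto
  ultimately have "card (A \<oplus> B) + 2 * card (A \<inter> B) = card A + card B"
    using card_Un_Int[OF assms] by linarith
  then show ?thesis by (metis even_add even_mult_iff even_numeral)
qed

lemma gf2_sum_gf2_add:
  assumes "finite A" "finite B"
  shows "gf2_sum \<phi> (A \<oplus> B) = gf2_sum \<phi> A \<oplus> gf2_sum \<phi> B"
proof -
  have "{y \<in> A \<oplus> B. n \<in> \<phi> y} = {y \<in> A. n \<in> \<phi> y} \<oplus> {y \<in> B. n \<in> \<phi> y}" for n
    by (auto simp: gf2_add_def)
  then have "odd (card {y \<in> A \<oplus> B. n \<in> \<phi> y}) \<longleftrightarrow>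
      odd (card {y \<in> A. n \<in> \<phi> y}) \<noteq> odd (card {y \<in> B. n \<in> \<phi> y})" for n
    using assms by (simp add: odd_card_gf2_add)
  then show ?thesis by (auto simp: gf2_sum_def gf2_add_def)
qed

lemma gf2_sum_subset:
  assumes "\<And>y. y \<in> Y \<Longrightarrow> \<phi> y \<subseteq> K"
  shows "gf2_sum \<phi> Y \<subseteq> K"
proof
  fix n assume "n \<in> gf2_sum \<phi> Y"
  then have "card {y \<in> Y. n \<in> \<phi> y} \<noteq> 0" by (intro notI) (simp add: gf2_sum_def)
  then have "{y \<in> Y. n \<in> \<phi> y} \<noteq> {}" by (metis card.empty)
  then show "n \<in> K" using assms by auto
qed

definition gf2_linear :: "(nat set \<Rightarrow> nat set) \<Rightarrow> bool" where
  "gf2_linear h \<longleftrightarrow> (\<forall>a b. h (a \<oplus> b) = h a \<oplus> h b)"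

lemma gf2_linear_empty: "gf2_linear h \<Longrightarrow> h {} = {}"
  unfolding gf2_linear_def by (metis gf2_add_self)

lemma gf2_linear_eq_iff: "gf2_linear h \<Longrightarrow> h a = h b \<longleftrightarrow> h (a \<oplus> b) = {}"
  unfolding gf2_linear_def by simp

lemma gf2_sum_linear:
  assumes "gf2_linear h" "finite Y"
  shows "gf2_sum (\<lambda>y. h (\<phi> y)) Y = h (gf2_sum \<phi> Y)"
  using assms(2)
proof (induction Y rule: finite_induct)
  case empty
  then show ?case using gf2_linear_empty[OF assms(1)] by simp
next
  case (insert y Y)
  then show ?case using assms(1) by (simp add: gf2_sum_insert gf2_linear_def)
qed

lemma gf2_indep_empty [simp]: "gf2_indep \<phi> {}"
  by (simp add: gf2_indep_def)

lemma gf2_indep_finite: "gf2_indep \<phi> X \<Longrightarrow> finite X"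
  by (simp add: gf2_indep_def)

lemma gf2_indep_sum_nonempty: "gf2_indep \<phi> X \<Longrightarrow> Y \<subseteq> X \<Longrightarrow> Y \<noteq> {} \<Longrightarrow> gf2_sum \<phi> Y \<noteq> {}"
  by (simp add: gf2_indep_def)

lemma gf2_indepI:
  "finite X \<Longrightarrow> inj_on \<phi> X \<Longrightarrow> (\<And>Y. Y \<subseteq> X \<Longrightarrow> Y \<noteq> {} \<Longrightarrow> gf2_sum \<phi> Y \<noteq> {}) \<Longrightarrow> gf2_indep \<phi> X"
  unfolding gf2_indep_def by blast

lemma gf2_indep_subset: "gf2_indep \<phi> X \<Longrightarrow> Y \<subseteq> X \<Longrightarrow> gf2_indep \<phi> Y"
  unfolding gf2_indep_def by (meson finite_subset inj_on_subset order_trans)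

lemma gf2_indep_singleton [simp]: "gf2_indep \<phi> {x} \<longleftrightarrow> \<phi> x \<noteq> {}"
proof -
  have "Y \<subseteq> {x} \<and> Y \<noteq> {} \<longleftrightarrow> Y = {x}" for Y :: "'a set"
    by blast
  then show ?thesis
    unfolding gf2_indep_def by simp
qed

lemma gf2_indep_doubleton:
  "gf2_indep \<phi> {x, y} \<longleftrightarrow> \<phi> x \<noteq> {} \<and> \<phi> y \<noteq> {} \<and> (x \<noteq> y \<longrightarrow> \<phi> x \<noteq> \<phi> y)"
proof (cases "x = y")
  case False
  have "Y \<subseteq> {x, y} \<and> Y \<noteq> {} \<longleftrightarrow> Y = {x} \<or> Y = {y} \<or> Y = {x, y}" for Y
    by blast
  then have "(\<forall>Y. Y \<subseteq> {x, y} \<and> Y \<noteq> {} \<longrightarrow> gf2_sum \<phi> Y \<noteq> {}) \<longleftrightarrow>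
      \<phi> x \<noteq> {} \<and> \<phi> y \<noteq> {} \<and> \<phi> x \<noteq> \<phi> y"
    using False by (simp add: gf2_sum_doubleton) blast
  then show ?thesis
    unfolding gf2_indep_def using False by (simp add: conj_ac)
qed simp

lemma gf2_indep_cong:
  assumes "\<And>x. x \<in> X \<Longrightarrow> \<phi> x = \<psi> x"
  shows "gf2_indep \<phi> X \<longleftrightarrow> gf2_indep \<psi> X"
proof -
  have "inj_on \<phi> X \<longleftrightarrow> inj_on \<psi> X"
    using assms inj_on_cong by blast
  moreover have "gf2_sum \<phi> Y = gf2_sum \<psi> Y" if "Y \<subseteq> X" for Y
    using assms that by (intro gf2_sum_cong) auto
  then have "(\<forall>Y. Y \<subseteq> X \<and> Y \<noteq> {} \<longrightarrow> gf2_sum \<phi> Y \<noteq> {}) \<longleftrightarrow>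
      (\<forall>Y. Y \<subseteq> X \<and> Y \<noteq> {} \<longrightarrow> gf2_sum \<psi> Y \<noteq> {})"
    by simp
  ultimately show ?thesis
    unfolding gf2_indep_def by blast
qed

lemma gf2_indep_reindex:
  assumes "inj_on \<psi> X"
  shows "gf2_indep \<phi> (\<psi> ` X) \<longleftrightarrow> gf2_indep (\<lambda>x. \<phi> (\<psi> x)) X"
proof -
  have "finite (\<psi> ` X) \<longleftrightarrow> finite X"
    using assms finite_image_iff by blast
  moreover have "inj_on \<phi> (\<psi> ` X) \<longleftrightarrow> inj_on (\<lambda>x. \<phi> (\<psi> x)) X"
    using comp_inj_on_iff[OF assms, of \<phi>] by (simp add: comp_def)
  moreover have "(\<forall>Z. Z \<subseteq> \<psi> ` X \<and> Z \<noteq> {} \<longrightarrow> gf2_sum \<phi> Z \<noteq> {}) \<longleftrightarrow>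
      (\<forall>Y. Y \<subseteq> X \<and> Y \<noteq> {} \<longrightarrow> gf2_sum \<phi> (\<psi> ` Y) \<noteq> {})"
    using all_subset_image[of \<psi> X "\<lambda>Z. Z \<noteq> {} \<longrightarrow> gf2_sum \<phi> Z \<noteq> {}"] by (simp add: imp_conjL)
  moreover have "gf2_sum \<phi> (\<psi> ` Y) = gf2_sum (\<lambda>x. \<phi> (\<psi> x)) Y" if "Y \<subseteq> X" for Y
    using assms that by (intro gf2_sum_reindex) (rule inj_on_subset)
  then have "(\<forall>Y. Y \<subseteq> X \<and> Y \<noteq> {} \<longrightarrow> gf2_sum \<phi> (\<psi> ` Y) \<noteq> {}) \<longleftrightarrow>
      (\<forall>Y. Y \<subseteq> X \<and> Y \<noteq> {} \<longrightarrow> gf2_sum (\<lambda>x. \<phi> (\<psi> x)) Y \<noteq> {})"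
    by simp
  ultimately show ?thesis
    unfolding gf2_indep_def by blast
qed

lemma gf2_indep_iff_image: "gf2_indep \<phi> X \<longleftrightarrow> inj_on \<phi> X \<and> gf2_indep id (\<phi> ` X)"
proof (cases "inj_on \<phi> X")
  case True
  then show ?thesis
    using gf2_indep_reindex[of \<phi> X id] by simp
next
  case False
  then show ?thesis
    by (simp add: gf2_indep_def)
qed

lemma gf2_indep_linear_compD:
  assumes "gf2_linear h" "gf2_indep (\<lambda>x. h (\<phi> x)) X"
  shows "gf2_indep \<phi> X"
proof -
  have "inj_on (h \<circ> \<phi>) X"
    using assms(2) by (simp add: gf2_indep_def comp_def)
  then have "inj_on \<phi> X"
    by (rule inj_on_imageI2)
  moreover have "gf2_sum \<phi> Y \<noteq> {}" if "Y \<subseteq> X" "Y \<noteq> {}" for Y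
  proof
    assume "gf2_sum \<phi> Y = {}"
    moreover have "finite Y"
      using that assms(2) gf2_indep_finite finite_subset by blast
    ultimately have "gf2_sum (\<lambda>x. h (\<phi> x)) Y = {}"
      using assms(1) by (simp add: gf2_sum_linear gf2_linear_empty)
    then show False
      using gf2_indep_sum_nonempty[OF assms(2) that] by blast
  qed
  ultimately show ?thesis
    using gf2_indep_finite[OF assms(2)] by (intro gf2_indepI)
qed

lemma gf2_indep_linear_compI:
  assumes "gf2_linear h" "gf2_indep \<phi> X"
    and "\<And>Y. Y \<subseteq> X \<Longrightarrow> h (gf2_sum \<phi> Y) = {} \<Longrightarrow> gf2_sum \<phi> Y = {}"
  shows "gf2_indep (\<lambda>x. h (\<phi> x)) X"
proof -
  have fin: "finite X"
    using assms(2) by (rule gf2_indep_finite)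
  have kernel: "gf2_sum (\<lambda>x. h (\<phi> x)) Y \<noteq> {}" if "Y \<subseteq> X" "Y \<noteq> {}" for Y
    using that assms(3)[OF that(1)] gf2_indep_sum_nonempty[OF assms(2) that]
      gf2_sum_linear[OF assms(1) finite_subset[OF that(1) fin]] by metis
  have "inj_on (\<lambda>x. h (\<phi> x)) X"
  proof (rule inj_onI, rule ccontr)
    fix x y assume "x \<in> X" "y \<in> X" "h (\<phi> x) = h (\<phi> y)" "x \<noteq> y"
    then have "gf2_sum (\<lambda>x. h (\<phi> x)) {x, y} = {}"
      by (simp add: gf2_sum_doubleton)
    then show False
      using kernel[of "{x, y}"] \<open>x \<in> X\<close> \<open>y \<in> X\<close> by blast
  qed
  then show ?thesis
    using fin kernel by (intro gf2_indepI)
qed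

lemma gf2_indep_linear_comp_iff:
  assumes "gf2_linear g" "\<And>c. c \<subseteq> K \<Longrightarrow> g c = {} \<Longrightarrow> c = {}" "\<And>x. x \<in> X \<Longrightarrow> \<psi> x \<subseteq> K"
  shows "gf2_indep (\<lambda>x. g (\<psi> x)) X \<longleftrightarrow> gf2_indep \<psi> X"
proof
  show "gf2_indep (\<lambda>x. g (\<psi> x)) X \<Longrightarrow> gf2_indep \<psi> X"
    using assms(1) by (rule gf2_indep_linear_compD)
next
  assume "gf2_indep \<psi> X"
  then show "gf2_indep (\<lambda>x. g (\<psi> x)) X"
  proof (rule gf2_indep_linear_compI[OF assms(1)])
    fix Y assume "Y \<subseteq> X" "g (gf2_sum \<psi> Y) = {}"
    moreover have "gf2_sum \<psi> Y \<subseteq> K"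
      using \<open>Y \<subseteq> X\<close> assms(3) by (intro gf2_sum_subset) blast
    ultimately show "gf2_sum \<psi> Y = {}"
      using assms(2) by blast
  qed
qed

definition gf2_span :: "nat set set \<Rightarrow> nat set set" where
  "gf2_span Y = gf2_sum id ` Pow Y"

lemma gf2_span_gf2_add:
  assumes "finite Y" "a \<in> gf2_span Y" "b \<in> gf2_span Y"
  shows "a \<oplus> b \<in> gf2_span Y"
proof -
  obtain A B where AB: "A \<subseteq> Y" "B \<subseteq> Y" "a = gf2_sum id A" "b = gf2_sum id B"
    using assms(2,3) by (auto simp: gf2_span_def)
  moreover have "finite A" "finite B"
    using AB(1,2) assms(1) finite_subset by blast+
  ultimately have "a \<oplus> b = gf2_sum id (A \<oplus> B)"
    by (simp add: gf2_sum_gf2_add)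
  moreover have "A \<oplus> B \<subseteq> Y"
    using AB(1,2) by (rule gf2_add_subset)
  ultimately show ?thesis
    unfolding gf2_span_def by blast
qed

lemma gf2_span_superset: "v \<in> Y \<Longrightarrow> v \<in> gf2_span Y"
  unfolding gf2_span_def by (metis Pow_iff empty_subsetI gf2_sum_singleton id_apply image_eqI insert_subset)

lemma gf2_indep_insert_iff:
  assumes "gf2_indep id Y" "v \<notin> Y"
  shows "gf2_indep id (insert v Y) \<longleftrightarrow> v \<notin> gf2_span Y"
proof
  assume indep: "gf2_indep id (insert v Y)"
  show "v \<notin> gf2_span Y"
  proof
    assume "v \<in> gf2_span Y"
    then obtain Z where "Z \<subseteq> Y" "gf2_sum id Z = v"
      by (auto simp: gf2_span_def)
    moreover have "finite Z"
      using calculation gf2_indep_finite[OF assms(1)] finite_subset by blast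
    moreover have "v \<notin> Z"
      using calculation assms(2) by blast
    ultimately have "gf2_sum id (insert v Z) = {}"
      by (simp add: gf2_sum_insert)
    then show False
      using gf2_indep_sum_nonempty[OF indep, of "insert v Z"] \<open>Z \<subseteq> Y\<close> by blast
  qed
next
  assume v: "v \<notin> gf2_span Y"
  have "gf2_sum id W \<noteq> {}" if W: "W \<subseteq> insert v Y" "W \<noteq> {}" for W
  proof (cases "v \<in> W")
    case False
    then show ?thesis
      using W gf2_indep_sum_nonempty[OF assms(1)] by blast
  next
    case True
    have "finite (W - {v})"
      using W gf2_indep_finite[OF assms(1)] finite_subset by blast
    then have "gf2_sum id W = v \<oplus> gf2_sum id (W - {v})"
      using gf2_sum_insert[of "W - {v}" v id] True by (simp add: insert_absorb)
    moreover have "gf2_sum id (W - {v}) \<in> gf2_span Y"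
      using W unfolding gf2_span_def by (intro imageI) blast
    then have "v \<noteq> gf2_sum id (W - {v})"
      using v by auto
    ultimately show ?thesis
      by simp
  qed
  then show "gf2_indep id (insert v Y)"
    using gf2_indep_finite[OF assms(1)] by (intro gf2_indepI) auto
qed

lemma gf2_indep_card:
  assumes "gf2_indep id Y" "Y \<subseteq> Pow K" "finite K"
  shows "card Y \<le> card K"
proof -
  have fin: "finite Y"
    using assms(1) by (rule gf2_indep_finite)
  have "inj_on (gf2_sum id) (Pow Y)"
  proof (rule inj_onI)
    fix A B assume AB: "A \<in> Pow Y" "B \<in> Pow Y" "gf2_sum id A = gf2_sum id B"
    moreover have "finite A" "finite B"
      using AB fin finite_subset by auto
    ultimately have "gf2_sum id (A \<oplus> B) = {}"
      by (simp add: gf2_sum_gf2_add)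
    moreover have "A \<oplus> B \<subseteq> Y"
      using AB by (intro gf2_add_subset) auto
    ultimately have "A \<oplus> B = {}"
      using gf2_indep_sum_nonempty[OF assms(1)] by blast
    then show "A = B"
      by simp
  qed
  moreover have "gf2_sum id A \<subseteq> K" if "A \<subseteq> Y" for A
    using that assms(2) by (intro gf2_sum_subset) auto
  then have "gf2_sum id ` Pow Y \<subseteq> Pow K"
    by auto
  ultimately have "card (Pow Y) \<le> card (Pow K)"
    using assms(3) by (intro card_inj_on_le) auto
  then show ?thesis
    using fin assms(3) by (simp add: card_Pow)
qed

lemma gf2_coordinates:
  assumes "gf2_indep id B" "card B = k"
  obtains g where "gf2_linear g" "\<And>c. c \<subseteq> {..<k} \<Longrightarrow> g c = {} \<Longrightarrow> c = {}"
    "\<And>v. v \<in> gf2_span B \<Longrightarrow> \<exists>c\<subseteq>{..<k}. g c = v"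
proof -
  obtain f where f: "bij_betw f {..<k} B"
    using ex_bij_betw_nat_finite[OF gf2_indep_finite[OF assms(1)]] assms(2)
    by (auto simp: atLeast0LessThan)
  define g where "g c = gf2_sum f (c \<inter> {..<k})" for c
  have sum_image: "gf2_sum id (f ` c) = g c" if "c \<subseteq> {..<k}" for c
    using that f gf2_sum_reindex[of f c id] inj_on_subset
    by (auto simp: g_def bij_betw_def Int_absorb2)
  show thesis
  proof
    show "gf2_linear g"
      unfolding gf2_linear_def
    proof (intro allI)
      fix c d
      have "(c \<oplus> d) \<inter> {..<k} = (c \<inter> {..<k}) \<oplus> (d \<inter> {..<k})"
        by (auto simp: gf2_add_def)
      then show "g (c \<oplus> d) = g c \<oplus> g d"
        by (simp add: g_def gf2_sum_gf2_add)
    qed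
  next
    fix c assume c: "c \<subseteq> {..<k}" "g c = {}"
    then have "gf2_sum id (f ` c) = {}"
      by (simp add: sum_image)
    moreover have "f ` c \<subseteq> B"
      using c(1) f by (auto simp: bij_betw_def)
    ultimately show "c = {}"
      using gf2_indep_sum_nonempty[OF assms(1)] by blast
  next
    fix v assume "v \<in> gf2_span B"
    then obtain Z where Z: "Z \<subseteq> B" "v = gf2_sum id Z"
      by (auto simp: gf2_span_def)
    define c where "c = {..<k} \<inter> f -` Z"
    have "f ` c = f ` {..<k} \<inter> Z"
      unfolding c_def by auto
    then have "f ` c = Z"
      using Z(1) f by (auto simp: bij_betw_def)
    moreover have "c \<subseteq> {..<k}"
      unfolding c_def by simp
    ultimately show "\<exists>c\<subseteq>{..<k}. g c = v"
      using sum_image[of c] Z(2) by auto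
  qed
qed

lemma card_le_rk:
  assumes "finite X" "Y \<subseteq> X" "indep M Y"
  shows "card Y \<le> rk M X"
proof -
  have "finite {card Y | Y. Y \<subseteq> X \<and> indep M Y}"
    using assms(1) by simp
  then show ?thesis
    unfolding rk_def using assms(2,3) by (intro Max_ge) auto
qed

lemma rk_witness:
  assumes "finite X" "indep M {}"
  obtains Y where "Y \<subseteq> X" "indep M Y" "card Y = rk M X"
proof -
  have "finite {card Y | Y. Y \<subseteq> X \<and> indep M Y}"
    using assms(1) by simp
  moreover have "{card Y | Y. Y \<subseteq> X \<and> indep M Y} \<noteq> {}"
    using assms(2) by blast
  ultimately have "rk M X \<in> {card Y | Y. Y \<subseteq> X \<and> indep M Y}"
    unfolding rk_def by (rule Max_in)
  then show ?thesis
    using that by auto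
qed

lemma ground_nonempty_if_rank_pos:
  assumes "matroid M" "0 < rank M"
  shows "ground M \<noteq> {}"
proof
  assume "ground M = {}"
  moreover have "finite (ground M)" "indep M {}"
    using assms(1) by (simp_all add: matroid_def)
  then obtain B where "B \<subseteq> ground M" "indep M B" "card B = rk M (ground M)"
    by (rule rk_witness)
  ultimately show False
    using assms(2) by (simp add: rank_def)
qed

lemma ground_restrict [simp]: "ground (restrict M S) = S \<inter> ground M"
  by (simp add: restrict_def ground_def)

lemma indep_restrict [simp]: "indep (restrict M S) X \<longleftrightarrow> X \<subseteq> S \<and> indep M X"
  by (simp add: restrict_def indep_def)

lemma ground_contract [simp]: "ground (contract M e) = ground M - {e}"
  by (simp add: contract_def ground_def)

lemma indep_contract:
  "indep (contract M e) X \<longleftrightarrow> e \<notin> X \<and> (if loop M e then indep M X else indep M (insert e X))"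
  by (simp add: contract_def indep_def)

section \<open>Flats of the binary projective geometry\<close>

definition PG_points :: "nat \<Rightarrow> nat set set" where
  "PG_points k = {v. v \<subseteq> {..<k} \<and> v \<noteq> {}}"

lemma ground_PG_rank: "ground (PG_rank k) = PG_points k"
  by (simp add: PG_rank_def ground_def PG_points_def)

lemma indep_PG_rank: "indep (PG_rank k) X \<longleftrightarrow> X \<subseteq> PG_points k \<and> gf2_indep id X"
  by (simp add: PG_rank_def indep_def PG_points_def)

lemma finite_PG_points: "finite (PG_points k)"
  by (rule finite_subset[of _ "Pow {..<k}"]) (auto simp: PG_points_def)

lemma finite_if_subset_PG_points: "X \<subseteq> PG_points k \<Longrightarrow> finite X"
  using finite_PG_points finite_subset by blast

lemma gf2_add_PG_points: "a \<in> PG_points k \<Longrightarrow> b \<in> PG_points k \<Longrightarrow> a \<noteq> b \<Longrightarrow> a \<oplus> b \<in> PG_points k"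
  by (auto simp: PG_points_def gf2_add_def)

lemma rk_witness_PG:
  assumes "X \<subseteq> PG_points k"
  obtains Y where "Y \<subseteq> X" "gf2_indep id Y" "card Y = rk (PG_rank k) X"
proof (rule rk_witness[of X "PG_rank k"])
  show "finite X"
    using assms by (rule finite_if_subset_PG_points)
  show "indep (PG_rank k) {}"
    by (simp add: indep_PG_rank)
  fix Y assume "Y \<subseteq> X" "indep (PG_rank k) Y" "card Y = rk (PG_rank k) X"
  then show thesis
    using that by (simp add: indep_PG_rank)
qed

text \<open>The point set of a projective subspace: \<open>C \<union> {{}}\<close> is a linear subspace.\<close>
definition sum_closed :: "nat set set \<Rightarrow> bool" where
  "sum_closed C \<longleftrightarrow> (\<forall>a\<in>C. \<forall>b\<in>C. a \<noteq> b \<longrightarrow> a \<oplus> b \<in> C)"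

lemma sum_closedD: "sum_closed C \<Longrightarrow> a \<in> C \<Longrightarrow> b \<in> C \<Longrightarrow> a \<noteq> b \<Longrightarrow> a \<oplus> b \<in> C"
  unfolding sum_closed_def by blast

lemma sum_closed_gf2_sum:
  assumes "sum_closed C" "finite Z" "\<phi> ` Z \<subseteq> C"
  shows "gf2_sum \<phi> Z \<in> insert {} C"
  using assms(2,3)
proof (induction Z rule: finite_induct)
  case (insert z Z)
  have "\<phi> z \<in> C" "\<phi> ` Z \<subseteq> C"
    using insert.prems by auto
  then have "gf2_sum \<phi> Z \<in> insert {} C"
    using insert.IH by blast
  moreover have "gf2_sum \<phi> (insert z Z) = \<phi> z \<oplus> gf2_sum \<phi> Z"
    using insert.hyps by (simp add: gf2_sum_insert)
  ultimately show ?case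
    using assms(1) \<open>\<phi> z \<in> C\<close> unfolding sum_closed_def by (cases "gf2_sum \<phi> Z = \<phi> z") auto
qed simp

lemma sum_closed_gf2_span:
  assumes "sum_closed C" "finite Y" "Y \<subseteq> C"
  shows "gf2_span Y \<subseteq> insert {} C"
proof
  fix v assume "v \<in> gf2_span Y"
  then obtain Z where Z: "Z \<subseteq> Y" "v = gf2_sum id Z"
    by (auto simp: gf2_span_def)
  moreover have "finite Z"
    using Z(1) assms(2) by (rule finite_subset)
  moreover have "id ` Z \<subseteq> C"
    using Z(1) assms(3) by auto
  ultimately show "v \<in> insert {} C"
    using sum_closed_gf2_sum[OF assms(1)] by blast
qed

lemma sum_closed_indep_insert:
  assumes "sum_closed C" "Y \<subseteq> C" "gf2_indep id Y" "x \<notin> C" "x \<noteq> {}"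
  shows "gf2_indep id (insert x Y)"
  using assms sum_closed_gf2_span[OF assms(1) gf2_indep_finite[OF assms(3)] assms(2)]
    gf2_indep_insert_iff[OF assms(3)] by blast

lemma flat_PG_if_sum_closed:
  assumes "C \<subseteq> PG_points k" "sum_closed C"
  shows "flat (PG_rank k) C"
  unfolding flat_def ground_PG_rank
proof (intro conjI ballI)
  fix x assume x: "x \<in> PG_points k - C"
  obtain Y where Y: "Y \<subseteq> C" "gf2_indep id Y" "card Y = rk (PG_rank k) C"
    using rk_witness_PG[OF assms(1)] .
  have "finite C"
    using assms(1) by (rule finite_if_subset_PG_points)
  have "x \<notin> Y" "x \<noteq> {}"
    using x Y(1) by (auto simp: PG_points_def)
  moreover have "indep (PG_rank k) (insert x Y)"
    using sum_closed_indep_insert[OF assms(2) Y(1,2)] x \<open>x \<noteq> {}\<close> Y(1) assms(1)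
    by (auto simp: indep_PG_rank)
  then have "card (insert x Y) \<le> rk (PG_rank k) (insert x C)"
    using Y(1) \<open>finite C\<close> by (intro card_le_rk) auto
  ultimately show "rk (PG_rank k) C < rk (PG_rank k) (insert x C)"
    using Y(2,3) gf2_indep_finite by fastforce
qed fact

lemma rk_PG_less_if_sum_closed:
  assumes "C \<subseteq> PG_points k" "sum_closed C" "x \<in> PG_points k - C"
  shows "rk (PG_rank k) C < k"
proof -
  obtain Y where Y: "Y \<subseteq> C" "gf2_indep id Y" "card Y = rk (PG_rank k) C"
    using rk_witness_PG[OF assms(1)] .
  have "x \<notin> Y" "x \<noteq> {}"
    using assms(3) Y(1) by (auto simp: PG_points_def)
  moreover have "card (insert x Y) \<le> card {..<k}"
  proof (rule gf2_indep_card)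
    show "gf2_indep id (insert x Y)"
      using sum_closed_indep_insert[OF assms(2) Y(1,2)] assms(3) by (auto simp: PG_points_def)
    show "insert x Y \<subseteq> Pow {..<k}"
      using assms Y(1) by (auto simp: PG_points_def)
  qed simp
  ultimately show ?thesis
    using Y(2,3) gf2_indep_finite by fastforce
qed

lemma sum_closed_if_flat_PG:
  assumes F: "flat (PG_rank k) F"
  shows "sum_closed F"
  unfolding sum_closed_def
proof (intro ballI impI, rule ccontr)
  fix a b assume ab: "a \<in> F" "b \<in> F" "a \<noteq> b" and c: "a \<oplus> b \<notin> F"
  have FU: "F \<subseteq> PG_points k"
    using F by (simp add: flat_def ground_PG_rank)
  then have "a \<oplus> b \<in> PG_points k - F"
    using ab c gf2_add_PG_points by blast
  then have grows: "rk (PG_rank k) F < rk (PG_rank k) (insert (a \<oplus> b) F)"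
    using F by (simp add: flat_def ground_PG_rank)
  obtain Y where Y: "Y \<subseteq> insert (a \<oplus> b) F" "gf2_indep id Y" "card Y = rk (PG_rank k) (insert (a \<oplus> b) F)"
    using rk_witness_PG[of "insert (a \<oplus> b) F" k] FU \<open>a \<oplus> b \<in> PG_points k - F\<close> by auto
  have rk_bound: "card Z \<le> rk (PG_rank k) F" if "Z \<subseteq> F" "gf2_indep id Z" for Z
    using that FU finite_if_subset_PG_points by (intro card_le_rk) (auto simp: indep_PG_rank)
  txt \<open>A largest independent \<open>Y\<close> in \<open>F + (a \<oplus> b)\<close> must contain \<open>a \<oplus> b\<close>. As \<open>a \<oplus> b\<close>
    is not spanned by the rest of \<open>Y\<close>, one of \<open>a\<close>, \<open>b\<close> is not either, and exchanging it
    for \<open>a \<oplus> b\<close> gives an equally large independent subset of \<open>F\<close>.\<close>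
  define Y' where "Y' = Y - {a \<oplus> b}"
  have "a \<oplus> b \<in> Y"
    using rk_bound[of Y] Y grows c by fastforce
  then have Y_eq: "Y = insert (a \<oplus> b) Y'" and "a \<oplus> b \<notin> Y'" "gf2_indep id Y'"
    using Y(2) gf2_indep_subset unfolding Y'_def by blast+
  then have "a \<oplus> b \<notin> gf2_span Y'"
    using Y(2) gf2_indep_insert_iff by metis
  then obtain z where z: "z \<in> {a, b}" "z \<notin> gf2_span Y'"
    using gf2_span_gf2_add[OF gf2_indep_finite[OF \<open>gf2_indep id Y'\<close>]] by blast
  then have "z \<notin> Y'" "gf2_indep id (insert z Y')"
    using gf2_span_superset gf2_indep_insert_iff[OF \<open>gf2_indep id Y'\<close>] by blast+
  moreover have "insert z Y' \<subseteq> F"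
    using z(1) ab Y(1) unfolding Y'_def by blast
  ultimately have "card Y \<le> rk (PG_rank k) F"
    using rk_bound[of "insert z Y'"] Y_eq \<open>a \<oplus> b \<notin> Y'\<close> gf2_indep_finite[OF \<open>gf2_indep id Y'\<close>]
    by simp
  then show False
    using Y(3) grows by simp
qed

section \<open>Embeddings of simple binary matroids into PG\<close>

lemma ground_delete_PG: "ground (delete (PG_rank k) F) = PG_points k - F"
  by (auto simp: delete_def ground_PG_rank)

lemma indep_delete_PG: "indep (delete (PG_rank k) F) X \<longleftrightarrow> X \<subseteq> PG_points k - F \<and> gf2_indep id X"
  by (auto simp: delete_def ground_PG_rank indep_PG_rank)

definition PG_embedding :: "('a \<Rightarrow> nat set) \<Rightarrow> 'a matroid \<Rightarrow> nat \<Rightarrow> bool" where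
  "PG_embedding \<psi> M k \<longleftrightarrow> inj_on \<psi> (ground M) \<and> \<psi> ` ground M \<subseteq> PG_points k \<and>
     (\<forall>X. X \<subseteq> ground M \<longrightarrow> (indep M X \<longleftrightarrow> gf2_indep id (\<psi> ` X)))"

lemma PG_embeddingD:
  assumes "PG_embedding \<psi> M k"
  shows "inj_on \<psi> (ground M)" and "x \<in> ground M \<Longrightarrow> \<psi> x \<in> PG_points k"
    and "X \<subseteq> ground M \<Longrightarrow> indep M X \<longleftrightarrow> gf2_indep id (\<psi> ` X)"
  using assms unfolding PG_embedding_def by auto

lemma iso_delete_PG_iff:
  "iso M (delete (PG_rank k) F) \<longleftrightarrow> (\<exists>\<psi>. PG_embedding \<psi> M k \<and> \<psi> ` ground M = PG_points k - F)"
proof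
  assume "iso M (delete (PG_rank k) F)"
  then obtain \<psi> where \<psi>: "bij_betw \<psi> (ground M) (PG_points k - F)"
    and indep: "\<And>X. X \<subseteq> ground M \<Longrightarrow> indep M X \<longleftrightarrow> indep (delete (PG_rank k) F) (\<psi> ` X)"
    unfolding iso_def ground_delete_PG by blast
  have "indep M X \<longleftrightarrow> gf2_indep id (\<psi> ` X)" if "X \<subseteq> ground M" for X
    using indep[OF that] that \<psi> by (auto simp: indep_delete_PG bij_betw_def)
  then show "\<exists>\<psi>. PG_embedding \<psi> M k \<and> \<psi> ` ground M = PG_points k - F"
    using \<psi> by (auto simp: PG_embedding_def bij_betw_def)
next
  assume "\<exists>\<psi>. PG_embedding \<psi> M k \<and> \<psi> ` ground M = PG_points k - F"
  then obtain \<psi> where "PG_embedding \<psi> M k" "\<psi> ` ground M = PG_points k - F"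
    by blast
  then show "iso M (delete (PG_rank k) F)"
    unfolding iso_def ground_delete_PG indep_delete_PG PG_embedding_def bij_betw_def
    by (intro exI[of _ \<psi>]) blast
qed

lemma mem_gf2_span_basis:
  assumes M: "matroid M" and \<phi>: "\<And>X. X \<subseteq> ground M \<Longrightarrow> indep M X \<longleftrightarrow> gf2_indep \<phi> X"
    and B: "B \<subseteq> ground M" "indep M B" "card B = rank M" and x: "x \<in> ground M"
  shows "\<phi> x \<in> gf2_span (\<phi> ` B)"
proof (rule ccontr)
  assume not_spanned: "\<phi> x \<notin> gf2_span (\<phi> ` B)"
  have B_indep: "inj_on \<phi> B" "gf2_indep id (\<phi> ` B)"
    using \<phi>[OF B(1)] B(2) gf2_indep_iff_image by blast+
  then have "\<phi> x \<notin> \<phi> ` B"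
    using not_spanned gf2_span_superset by blast
  then have "gf2_indep \<phi> (insert x B)"
    using B_indep not_spanned gf2_indep_insert_iff gf2_indep_iff_image[of \<phi> "insert x B"] by auto
  then have "indep M (insert x B)"
    using \<phi> B(1) x by blast
  then have "card (insert x B) \<le> rank M"
    using B(1) x M unfolding rank_def matroid_def by (intro card_le_rk) auto
  moreover have "x \<notin> B" "finite B"
    using \<open>\<phi> x \<notin> \<phi> ` B\<close> gf2_indep_finite[OF B_indep(2)] B_indep(1) finite_image_iff by blast+
  ultimately show False
    using B(3) by simp
qed

lemma binary_matroid_coordinates:
  assumes M: "matroid M" and "binary M"
  obtains \<psi> where "\<And>x. x \<in> ground M \<Longrightarrow> \<psi> x \<subseteq> {..<rank M}"
    "\<And>X. X \<subseteq> ground M \<Longrightarrow> indep M X \<longleftrightarrow> gf2_indep \<psi> X"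
proof -
  let ?E = "ground M" and ?K = "{..<rank M}"
  obtain \<phi> :: "'a \<Rightarrow> nat set" where \<phi>: "\<And>X. X \<subseteq> ?E \<Longrightarrow> indep M X \<longleftrightarrow> gf2_indep \<phi> X"
    using \<open>binary M\<close> unfolding binary_def by blast
  have "finite ?E" "indep M {}"
    using M by (simp_all add: matroid_def)
  then obtain B where B: "B \<subseteq> ?E" "indep M B" "card B = rk M ?E"
    by (rule rk_witness)
  then have B_rank: "card B = rank M"
    by (simp add: rank_def)
  have B_inj: "inj_on \<phi> B" and B_indep: "gf2_indep id (\<phi> ` B)"
    using \<phi>[OF B(1)] B(2) gf2_indep_iff_image by blast+
  have "card (\<phi> ` B) = rank M"
    using B_inj B_rank by (simp add: card_image)
  with B_indep obtain g where g: "gf2_linear g" "\<And>c. c \<subseteq> ?K \<Longrightarrow> g c = {} \<Longrightarrow> c = {}"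
    "\<And>v. v \<in> gf2_span (\<phi> ` B) \<Longrightarrow> \<exists>c\<subseteq>?K. g c = v"
    by (rule gf2_coordinates) blast
  define \<psi> where "\<psi> x = (SOME c. c \<subseteq> ?K \<and> g c = \<phi> x)" for x
  have \<psi>: "\<psi> x \<subseteq> ?K" "g (\<psi> x) = \<phi> x" if "x \<in> ?E" for x
    using someI_ex[OF g(3)[OF mem_gf2_span_basis[OF M \<phi> B(1,2) B_rank that]]] unfolding \<psi>_def by blast+
  have "indep M X \<longleftrightarrow> gf2_indep \<psi> X" if X: "X \<subseteq> ?E" for X
  proof -
    have "indep M X \<longleftrightarrow> gf2_indep (\<lambda>x. g (\<psi> x)) X"
      using \<phi>[OF X] X \<psi>(2) gf2_indep_cong[of X \<phi> "\<lambda>x. g (\<psi> x)"] by auto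
    also have "\<dots> \<longleftrightarrow> gf2_indep \<psi> X"
      using g(1,2) X \<psi>(1) by (intro gf2_indep_linear_comp_iff) auto
    finally show ?thesis .
  qed
  with \<psi>(1) show thesis
    by (rule that)
qed

lemma binary_simple_PG_embedding:
  assumes M: "matroid M" and "simple M" and "binary M"
  obtains \<psi> where "PG_embedding \<psi> M (rank M)"
proof -
  obtain \<psi> where \<psi>: "\<And>x. x \<in> ground M \<Longrightarrow> \<psi> x \<subseteq> {..<rank M}"
    and indep: "\<And>X. X \<subseteq> ground M \<Longrightarrow> indep M X \<longleftrightarrow> gf2_indep \<psi> X"
    using binary_matroid_coordinates[OF M \<open>binary M\<close>] by blast
  have pairs: "\<psi> x \<noteq> {} \<and> (x \<noteq> y \<longrightarrow> \<psi> x \<noteq> \<psi> y)" if "x \<in> ground M" "y \<in> ground M" for x y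
    using \<open>simple M\<close> indep[of "{x, y}"] that unfolding simple_def by (simp add: gf2_indep_doubleton)
  then have "inj_on \<psi> (ground M)"
    by (meson inj_onI)
  moreover have "\<psi> ` ground M \<subseteq> PG_points (rank M)"
    using \<psi> pairs by (auto simp: PG_points_def)
  moreover have "indep M X \<longleftrightarrow> gf2_indep id (\<psi> ` X)" if "X \<subseteq> ground M" for X
    using indep[OF that] gf2_indep_iff_image inj_on_subset[OF \<open>inj_on \<psi> (ground M)\<close> that] by blast
  ultimately show thesis
    using that unfolding PG_embedding_def by blast
qed

lemma ex1_same_image_iff:
  assumes "S \<subseteq> A"
  shows "(\<forall>x\<in>A. \<exists>!s. s \<in> S \<and> f s = f x) \<longleftrightarrow> inj_on f S \<and> f ` S = f ` A"
proof
  assume "\<forall>x\<in>A. \<exists>!s. s \<in> S \<and> f s = f x"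
  then have unique: "\<exists>!s. s \<in> S \<and> f s = f x" if "x \<in> A" for x
    using that by blast
  have "inj_on f S"
  proof (rule inj_onI)
    fix s s' assume "s \<in> S" "s' \<in> S" "f s = f s'"
    then show "s = s'"
      using unique[of s'] assms by blast
  qed
  moreover have "f ` A \<subseteq> f ` S"
  proof
    fix y assume "y \<in> f ` A"
    then obtain x where x: "x \<in> A" "y = f x"
      by blast
    then obtain s where "s \<in> S" "f s = f x"
      using unique by (meson ex1E)
    then show "y \<in> f ` S"
      using x(2) by (intro rev_image_eqI[of s]) auto
  qed
  moreover have "f ` S \<subseteq> f ` A"
    using assms by (rule image_mono)
  ultimately show "inj_on f S \<and> f ` S = f ` A"
    by blast
next
  assume S: "inj_on f S \<and> f ` S = f ` A"
  show "\<forall>x\<in>A. \<exists>!s. s \<in> S \<and> f s = f x"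
  proof
    fix x assume "x \<in> A"
    then have "f x \<in> f ` S"
      using S by simp
    then obtain s where "f x = f s" "s \<in> S"
      by (rule imageE)
    then show "\<exists>!s. s \<in> S \<and> f s = f x"
      using S by (intro ex1I[of _ s]) (auto simp: inj_on_def)
  qed
qed

text \<open>Parallel classes are the fibres of the (not necessarily injective) representation \<open>\<kappa>\<close>.\<close>
lemma is_simplification_iff_inj_image:
  assumes \<kappa>: "\<kappa> ` ground N \<subseteq> PG_points r"
    and indep: "\<And>X. X \<subseteq> ground N \<Longrightarrow> indep N X \<longleftrightarrow> gf2_indep \<kappa> X"
  shows "is_simplification N S \<longleftrightarrow> S \<subseteq> ground N \<and> inj_on \<kappa> S \<and> \<kappa> ` S = \<kappa> ` ground N"
proof -
  have no_loop: "\<not> loop N x" if "x \<in> ground N" for x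
    using that \<kappa> indep[of "{x}"] by (auto simp: loop_def PG_points_def)
  have same_class: "s = x \<or> parallel N s x \<longleftrightarrow> \<kappa> s = \<kappa> x"
    if "s \<in> ground N" "x \<in> ground N" for s x
    using that no_loop indep[of "{s, x}"] \<kappa> unfolding parallel_def
    by (auto simp: gf2_indep_doubleton PG_points_def)
  show ?thesis
  proof (cases "S \<subseteq> ground N")
    case True
    then have "s \<in> S \<and> (s = x \<or> parallel N s x) \<longleftrightarrow> s \<in> S \<and> \<kappa> s = \<kappa> x"
      if "x \<in> ground N" for s x
      using same_class[of s x] that by blast
    moreover have "\<forall>s\<in>S. \<not> loop N s"
      using True no_loop by blast
    ultimately have "is_simplification N S \<longleftrightarrow> (\<forall>x\<in>ground N. \<exists>!s. s \<in> S \<and> \<kappa> s = \<kappa> x)"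
      unfolding is_simplification_def using True no_loop by simp
    then show ?thesis
      using ex1_same_image_iff[OF True, of \<kappa>] True by simp
  qed (simp add: is_simplification_def)
qed

lemma iso_restrict_PG_if_bij:
  assumes S: "S \<subseteq> ground N" "bij_betw \<kappa> S (PG_points r)"
    and indep: "\<And>X. X \<subseteq> ground N \<Longrightarrow> indep N X \<longleftrightarrow> gf2_indep \<kappa> X"
  shows "iso (restrict N S) (PG_rank r)"
  unfolding iso_def
proof (intro exI conjI allI impI)
  show "bij_betw \<kappa> (ground (restrict N S)) (ground (PG_rank r))"
    using S by (simp add: Int_absorb2 ground_PG_rank)
  fix X assume "X \<subseteq> ground (restrict N S)"
  then have "X \<subseteq> S" "inj_on \<kappa> X"
    using S inj_on_subset by (auto simp: bij_betw_def)
  then show "indep (restrict N S) X \<longleftrightarrow> indep (PG_rank r) (\<kappa> ` X)"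
    using indep[of X] S gf2_indep_iff_image[of \<kappa> X]
    by (auto simp: indep_PG_rank bij_betw_def)
qed

lemma simplification_iso_PG_iff:
  assumes \<kappa>: "\<kappa> ` ground N \<subseteq> PG_points r"
    and indep: "\<And>X. X \<subseteq> ground N \<Longrightarrow> indep N X \<longleftrightarrow> gf2_indep \<kappa> X"
  shows "(\<exists>S. is_simplification N S \<and> iso (restrict N S) (PG_rank r)) \<longleftrightarrow>
    \<kappa> ` ground N = PG_points r"
proof
  assume "\<exists>S. is_simplification N S \<and> iso (restrict N S) (PG_rank r)"
  then obtain S where "is_simplification N S" and iso: "iso (restrict N S) (PG_rank r)"
    by blast
  then have S: "S \<subseteq> ground N" "inj_on \<kappa> S" "\<kappa> ` S = \<kappa> ` ground N"
    using is_simplification_iff_inj_image[OF \<kappa> indep, of S] by simp_all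
  obtain f where "bij_betw f (ground (restrict N S)) (ground (PG_rank r))"
    using iso unfolding iso_def by blast
  then have "bij_betw f S (PG_points r)"
    by (simp add: ground_PG_rank Int_absorb2[OF S(1)])
  then have "card S = card (PG_points r)"
    by (rule bij_betw_same_card)
  then have "card (\<kappa> ` ground N) = card (PG_points r)"
    using card_image[OF S(2)] S(3) by simp
  then show "\<kappa> ` ground N = PG_points r"
    using \<kappa> finite_PG_points by (simp add: card_subset_eq)
next
  assume onto: "\<kappa> ` ground N = PG_points r"
  define S where "S = inv_into (ground N) \<kappa> ` PG_points r"
  have \<kappa>_inv: "\<kappa> (inv_into (ground N) \<kappa> y) = y" if "y \<in> PG_points r" for y
    using that onto by (simp add: f_inv_into_f)
  have S: "S \<subseteq> ground N" "inj_on \<kappa> S" "\<kappa> ` S = PG_points r"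
    unfolding S_def using onto
    by (auto intro: inv_into_into inj_onI simp: \<kappa>_inv image_image cong: image_cong)
  then have "is_simplification N S"
    using is_simplification_iff_inj_image[OF \<kappa> indep] onto by simp
  moreover have "iso (restrict N S) (PG_rank r)"
    using S indep by (intro iso_restrict_PG_if_bij) (simp_all add: bij_betw_def)
  ultimately show "\<exists>S. is_simplification N S \<and> iso (restrict N S) (PG_rank r)"
    by blast
qed

section \<open>Contraction of an embedded matroid\<close>

definition gf2_quotient_map :: "(nat set \<Rightarrow> nat set) \<Rightarrow> nat \<Rightarrow> nat set \<Rightarrow> bool" where
  "gf2_quotient_map q r p \<longleftrightarrow> gf2_linear q \<and>
     (\<forall>u. u \<subseteq> {..<Suc r} \<longrightarrow> q u \<subseteq> {..<r} \<and> (q u = {} \<longleftrightarrow> u = {} \<or> u = p)) \<and>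
     (\<forall>w. w \<subseteq> {..<r} \<longrightarrow> (\<exists>u. u \<subseteq> {..<Suc r} \<and> q u = w)) \<and>
     p \<in> PG_points (Suc r)"

definition skip_index :: "nat \<Rightarrow> nat \<Rightarrow> nat" where
  "skip_index j i = (if i < j then i else Suc i)"

lemma inj_skip_index: "inj (skip_index j)"
  by (auto simp: inj_def skip_index_def)

lemma range_skip_index: "range (skip_index j) = - {j}"
proof -
  have "m \<in> range (skip_index j)" if "m \<noteq> j" for m
  proof (cases "m < j")
    case True
    then have "skip_index j m = m"
      by (simp add: skip_index_def)
    then show ?thesis
      by (metis rangeI)
  next
    case False
    then have "skip_index j (m - 1) = m"
      using that by (simp add: skip_index_def)
    then show ?thesis
      by (metis rangeI)
  qed
  then show ?thesis
    by (auto simp: skip_index_def)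
qed

lemma vimage_skip_index_eq_empty_iff: "skip_index j -` A = {} \<longleftrightarrow> A \<subseteq> {j}"
proof -
  have "skip_index j -` A = {} \<longleftrightarrow> A \<inter> range (skip_index j) = {}"
    by blast
  then show ?thesis
    by (auto simp: range_skip_index)
qed

lemma skip_index_less_Suc_iff: "j < Suc r \<Longrightarrow> skip_index j i < Suc r \<longleftrightarrow> i < r"
  by (simp add: skip_index_def)

text \<open>Pick a coordinate \<open>j \<in> p\<close>, add \<open>p\<close> to the vectors having a \<open>j\<close>-coordinate, and then
  delete coordinate \<open>j\<close>.\<close>
lemma gf2_quotient_map_exists:
  assumes "p \<in> PG_points (Suc r)"
  obtains q where "gf2_quotient_map q r p"
proof -
  obtain j where j: "j \<in> p" "j < Suc r"
    using assms by (auto simp: PG_points_def)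
  define q where "q u = skip_index j -` (if j \<in> u then u \<oplus> p else u)" for u
  have "gf2_linear q"
    using j(1) unfolding gf2_linear_def q_def gf2_add_def by auto
  moreover have "q u \<subseteq> {..<r}" if "u \<subseteq> {..<Suc r}" for u
  proof -
    have "p \<subseteq> {..<Suc r}"
      using assms by (simp add: PG_points_def)
    then have "(if j \<in> u then u \<oplus> p else u) \<subseteq> {..<Suc r}"
      using that by (simp add: gf2_add_subset)
    then show ?thesis
      unfolding q_def using skip_index_less_Suc_iff[OF j(2)] by auto
  qed
  moreover have "q u = {} \<longleftrightarrow> u = {} \<or> u = p" for u
  proof -
    have "q u = {} \<longleftrightarrow> (if j \<in> u then u \<oplus> p else u) \<subseteq> {j}"
      unfolding q_def by (rule vimage_skip_index_eq_empty_iff)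
    also have "\<dots> \<longleftrightarrow> u = {} \<or> u = p"
      using j(1) by (auto simp: gf2_add_def)
    finally show ?thesis .
  qed
  moreover have "\<exists>u. u \<subseteq> {..<Suc r} \<and> q u = w" if "w \<subseteq> {..<r}" for w
  proof (intro exI conjI)
    show "skip_index j ` w \<subseteq> {..<Suc r}"
      using that skip_index_less_Suc_iff[OF j(2)] by auto
    have "j \<notin> skip_index j ` w"
      using range_skip_index by blast
    then show "q (skip_index j ` w) = w"
      by (simp add: q_def inj_vimage_image_eq[OF inj_skip_index])
  qed
  ultimately have "gf2_quotient_map q r p"
    unfolding gf2_quotient_map_def using assms by simp
  then show thesis
    by (rule that)
qed

lemma gf2_quotient_mapD:
  assumes "gf2_quotient_map q r p"
  shows "gf2_linear q"
    and "u \<subseteq> {..<Suc r} \<Longrightarrow> q u \<subseteq> {..<r}"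
    and "u \<subseteq> {..<Suc r} \<Longrightarrow> q u = {} \<longleftrightarrow> u = {} \<or> u = p"
    and "w \<subseteq> {..<r} \<Longrightarrow> \<exists>u. u \<subseteq> {..<Suc r} \<and> q u = w"
    and "p \<in> PG_points (Suc r)"
  using assms unfolding gf2_quotient_map_def by simp_all

lemma gf2_quotient_map_add_point:
  assumes q: "gf2_quotient_map q r p"
  shows "q (u \<oplus> p) = q u"
proof -
  have "q p = {}"
    using gf2_quotient_mapD(3,5)[OF q] by (simp add: PG_points_def)
  then show ?thesis
    using gf2_quotient_mapD(1)[OF q] by (simp add: gf2_linear_def)
qed

lemma gf2_quotient_map_eq_iff:
  assumes q: "gf2_quotient_map q r p" and "u \<subseteq> {..<Suc r}" "v \<subseteq> {..<Suc r}"
  shows "q u = q v \<longleftrightarrow> v = u \<or> v = u \<oplus> p"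
proof -
  have "q u = q v \<longleftrightarrow> q (u \<oplus> v) = {}"
    by (rule gf2_linear_eq_iff[OF gf2_quotient_mapD(1)[OF q]])
  also have "\<dots> \<longleftrightarrow> u \<oplus> v = {} \<or> u \<oplus> v = p"
    using assms(2,3) by (intro gf2_quotient_mapD(3)[OF q] gf2_add_subset)
  also have "\<dots> \<longleftrightarrow> v = u \<or> v = u \<oplus> p"
    by (auto simp: gf2_add_eq_iff)
  finally show ?thesis .
qed

lemma gf2_quotient_map_PG_points:
  assumes q: "gf2_quotient_map q r p" and "u \<in> PG_points (Suc r)" "u \<noteq> p"
  shows "q u \<in> PG_points r"
proof -
  have "u \<subseteq> {..<Suc r}" "u \<noteq> {}"
    using assms(2) by (simp_all add: PG_points_def)
  then show ?thesis
    using gf2_quotient_mapD(2,3)[OF q] assms(3) by (simp add: PG_points_def)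
qed

lemma gf2_indep_insert_iff_quotient_map:
  assumes q: "gf2_quotient_map q r p" and "p \<notin> W" "W \<subseteq> Pow {..<Suc r}"
  shows "gf2_indep id (insert p W) \<longleftrightarrow> gf2_indep q W"
proof -
  note linear = gf2_quotient_mapD(1)[OF q] and kernel = gf2_quotient_mapD(3)[OF q]
  have p: "p \<noteq> {}" "p \<subseteq> {..<Suc r}"
    using gf2_quotient_mapD(5)[OF q] by (simp_all add: PG_points_def)
  show ?thesis
  proof
    assume indep: "gf2_indep id (insert p W)"
    then have W: "gf2_indep id W" "p \<notin> gf2_span W"
      using gf2_indep_subset gf2_indep_insert_iff assms(2) by blast+
    have "gf2_indep (\<lambda>x. q (id x)) W"
    proof (rule gf2_indep_linear_compI[OF linear W(1)])
      fix Y assume Y: "Y \<subseteq> W" "q (gf2_sum id Y) = {}"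
      have "gf2_sum id Y \<subseteq> {..<Suc r}"
        using Y(1) assms(3) by (intro gf2_sum_subset) auto
      moreover have "gf2_sum id Y \<noteq> p"
        using W(2) Y(1) by (auto simp: gf2_span_def)
      ultimately show "gf2_sum id Y = {}"
        using kernel Y(2) by blast
    qed
    then show "gf2_indep q W"
      by simp
  next
    assume indep: "gf2_indep q W"
    then have W: "gf2_indep id W"
      using gf2_indep_linear_compD[OF linear, of id W] by simp
    have "p \<notin> gf2_span W"
    proof
      assume "p \<in> gf2_span W"
      then obtain Z where Z: "Z \<subseteq> W" "gf2_sum id Z = p"
        by (auto simp: gf2_span_def)
      have "gf2_sum q Z = q p"
        using gf2_sum_linear[OF linear, of Z id] Z gf2_indep_finite[OF W] finite_subset by auto
      also have "\<dots> = {}"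
        using kernel[OF p(2)] by simp
      finally have "gf2_sum q Z = {}" .
      moreover have "Z \<noteq> {}"
        using Z(2) p(1) by auto
      ultimately show False
        using gf2_indep_sum_nonempty[OF indep Z(1)] by blast
    qed
    then show "gf2_indep id (insert p W)"
      using W assms(2) gf2_indep_insert_iff by blast
  qed
qed

lemma indep_contract_PG_embedding:
  assumes \<psi>: "PG_embedding \<psi> M (Suc r)" and e: "e \<in> ground M"
    and q: "gf2_quotient_map q r (\<psi> e)" and X: "X \<subseteq> ground M - {e}"
  shows "indep (contract M e) X \<longleftrightarrow> gf2_indep (\<lambda>x. q (\<psi> x)) X"
proof -
  have "\<psi> e \<noteq> {}"
    using PG_embeddingD(2)[OF \<psi> e] by (simp add: PG_points_def)
  then have "\<not> loop M e"
    using PG_embeddingD(3)[OF \<psi>, of "{e}"] e by (simp add: loop_def)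
  then have "indep (contract M e) X \<longleftrightarrow> indep M (insert e X)"
    using X by (auto simp: indep_contract)
  also have "\<dots> \<longleftrightarrow> gf2_indep id (insert (\<psi> e) (\<psi> ` X))"
    using PG_embeddingD(3)[OF \<psi>, of "insert e X"] X e by auto
  also have "\<dots> \<longleftrightarrow> gf2_indep q (\<psi> ` X)"
  proof (rule gf2_indep_insert_iff_quotient_map[OF q])
    show "\<psi> e \<notin> \<psi> ` X"
      using PG_embeddingD(1)[OF \<psi>] X e by (auto simp: inj_on_def)
    show "\<psi> ` X \<subseteq> Pow {..<Suc r}"
      using PG_embeddingD(2)[OF \<psi>] X by (auto simp: PG_points_def)
  qed
  also have "\<dots> \<longleftrightarrow> gf2_indep (\<lambda>x. q (\<psi> x)) X"
    using inj_on_subset[OF PG_embeddingD(1)[OF \<psi>]] X by (intro gf2_indep_reindex) auto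
  finally show ?thesis .
qed

lemma gf2_quotient_map_image_iff:
  assumes q: "gf2_quotient_map q r p" and P: "P \<subseteq> PG_points (Suc r)" "p \<in> P"
  shows "q ` (P - {p}) = PG_points r \<longleftrightarrow> (\<forall>u\<in>PG_points (Suc r) - {p}. u \<in> P \<or> u \<oplus> p \<in> P)"
proof
  assume onto: "q ` (P - {p}) = PG_points r"
  show "\<forall>u\<in>PG_points (Suc r) - {p}. u \<in> P \<or> u \<oplus> p \<in> P"
  proof
    fix u assume u: "u \<in> PG_points (Suc r) - {p}"
    then have "q u \<in> q ` (P - {p})"
      using gf2_quotient_map_PG_points[OF q] onto by blast
    then obtain v where "v \<in> P" "q u = q v"
      by blast
    moreover have "u \<subseteq> {..<Suc r}" "v \<subseteq> {..<Suc r}"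
      using u P(1) \<open>v \<in> P\<close> by (auto simp: PG_points_def)
    ultimately show "u \<in> P \<or> u \<oplus> p \<in> P"
      using gf2_quotient_map_eq_iff[OF q] by blast
  qed
next
  assume cover: "\<forall>u\<in>PG_points (Suc r) - {p}. u \<in> P \<or> u \<oplus> p \<in> P"
  show "q ` (P - {p}) = PG_points r"
  proof
    show "q ` (P - {p}) \<subseteq> PG_points r"
      using gf2_quotient_map_PG_points[OF q] P(1) by blast
  next
    show "PG_points r \<subseteq> q ` (P - {p})"
    proof
      fix w assume w: "w \<in> PG_points r"
      then obtain u where u: "u \<subseteq> {..<Suc r}" "q u = w"
        using gf2_quotient_mapD(4)[OF q] by (auto simp: PG_points_def)
      then have "u \<noteq> {}" "u \<noteq> p"
        using w gf2_quotient_mapD(3)[OF q] by (auto simp: PG_points_def)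
      then have "u \<in> P \<or> u \<oplus> p \<in> P"
        using cover u(1) by (simp add: PG_points_def)
      moreover have "q (u \<oplus> p) = w" "u \<oplus> p \<noteq> p"
        using gf2_quotient_map_add_point[OF q] u(2) \<open>u \<noteq> {}\<close> by simp_all
      ultimately show "w \<in> q ` (P - {p})"
        using u(2) \<open>u \<noteq> p\<close> by blast
    qed
  qed
qed

lemma contract_simplification_iso_PG_iff:
  assumes \<psi>: "PG_embedding \<psi> M (Suc r)" and e: "e \<in> ground M"
  shows "(\<exists>S. is_simplification (contract M e) S \<and> iso (restrict (contract M e) S) (PG_rank r)) \<longleftrightarrow>
    (\<forall>u\<in>PG_points (Suc r) - {\<psi> e}. u \<in> \<psi> ` ground M \<or> u \<oplus> \<psi> e \<in> \<psi> ` ground M)"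
proof -
  obtain q where q: "gf2_quotient_map q r (\<psi> e)"
    using gf2_quotient_map_exists PG_embeddingD(2)[OF \<psi> e] by blast
  have "\<psi> ` (ground M - {e}) = \<psi> ` ground M - {\<psi> e}"
    using inj_on_image_set_diff[OF PG_embeddingD(1)[OF \<psi>], of "ground M" "{e}"] e by simp
  then have image: "(\<lambda>x. q (\<psi> x)) ` (ground M - {e}) = q ` (\<psi> ` ground M - {\<psi> e})"
    unfolding image_image[symmetric] by simp
  have "(\<lambda>x. q (\<psi> x)) ` ground (contract M e) \<subseteq> PG_points r"
  proof
    fix y assume "y \<in> (\<lambda>x. q (\<psi> x)) ` ground (contract M e)"
    then obtain x where x: "x \<in> ground M" "x \<noteq> e" "y = q (\<psi> x)"
      by auto
    then have "\<psi> x \<noteq> \<psi> e"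
      using inj_onD[OF PG_embeddingD(1)[OF \<psi>] _ x(1) e] by blast
    then show "y \<in> PG_points r"
      using gf2_quotient_map_PG_points[OF q PG_embeddingD(2)[OF \<psi> x(1)]] x(3) by simp
  qed
  then have "(\<exists>S. is_simplification (contract M e) S \<and> iso (restrict (contract M e) S) (PG_rank r)) \<longleftrightarrow>
      (\<lambda>x. q (\<psi> x)) ` (ground M - {e}) = PG_points r"
    using indep_contract_PG_embedding[OF \<psi> e q] by (subst simplification_iso_PG_iff) auto
  also have "\<dots> \<longleftrightarrow> (\<forall>u\<in>PG_points (Suc r) - {\<psi> e}. u \<in> \<psi> ` ground M \<or> u \<oplus> \<psi> e \<in> \<psi> ` ground M)"
    unfolding image using PG_embeddingD(2)[OF \<psi>] e by (intro gf2_quotient_map_image_iff[OF q]) auto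
  finally show ?thesis .
qed

section \<open>Projective geometries minus a flat\<close>

lemma sum_closed_complement_iff:
  assumes "P \<subseteq> PG_points k"
  shows "(\<forall>p\<in>P. \<forall>u\<in>PG_points k - {p}. u \<in> P \<or> u \<oplus> p \<in> P) \<longleftrightarrow> sum_closed (PG_points k - P)"
proof
  assume lines: "\<forall>p\<in>P. \<forall>u\<in>PG_points k - {p}. u \<in> P \<or> u \<oplus> p \<in> P"
  show "sum_closed (PG_points k - P)"
    unfolding sum_closed_def
  proof (intro ballI impI)
    fix a b assume a: "a \<in> PG_points k - P" and b: "b \<in> PG_points k - P" and "a \<noteq> b"
    then have "a \<oplus> b \<in> PG_points k"
      by (simp add: gf2_add_PG_points)
    moreover have "a \<oplus> b \<notin> P"
    proof
      assume "a \<oplus> b \<in> P"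
      moreover have "a \<in> PG_points k - {a \<oplus> b}"
        using a b by (simp add: PG_points_def)
      ultimately have "a \<in> P \<or> a \<oplus> (a \<oplus> b) \<in> P"
        using lines by blast
      then show False
        using a b by simp
    qed
    ultimately show "a \<oplus> b \<in> PG_points k - P"
      by blast
  qed
next
  assume closed: "sum_closed (PG_points k - P)"
  show "\<forall>p\<in>P. \<forall>u\<in>PG_points k - {p}. u \<in> P \<or> u \<oplus> p \<in> P"
  proof (intro ballI)
    fix p u assume p: "p \<in> P" and u: "u \<in> PG_points k - {p}"
    then have "p \<in> PG_points k"
      using assms by blast
    then have "u \<oplus> p \<in> PG_points k" "u \<noteq> u \<oplus> p"
      using u gf2_add_PG_points[of u k p] by (simp_all add: PG_points_def)
    show "u \<in> P \<or> u \<oplus> p \<in> P"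
    proof (rule ccontr)
      assume "\<not> (u \<in> P \<or> u \<oplus> p \<in> P)"
      then have "u \<oplus> (u \<oplus> p) \<in> PG_points k - P"
        using sum_closedD[OF closed] u \<open>u \<oplus> p \<in> PG_points k\<close> \<open>u \<noteq> u \<oplus> p\<close> by blast
      then show False
        using p by simp
    qed
  qed
qed

lemma all_contract_simplification_iso_PG_iff:
  assumes \<psi>: "PG_embedding \<psi> M (Suc r)"
  shows "(\<forall>e\<in>ground M. \<exists>S. is_simplification (contract M e) S \<and> iso (restrict (contract M e) S) (PG_rank r))
    \<longleftrightarrow> sum_closed (PG_points (Suc r) - \<psi> ` ground M)"
proof -
  have "(\<forall>e\<in>ground M. \<exists>S. is_simplification (contract M e) S \<and> iso (restrict (contract M e) S) (PG_rank r))
      \<longleftrightarrow> (\<forall>e\<in>ground M. \<forall>u\<in>PG_points (Suc r) - {\<psi> e}. u \<in> \<psi> ` ground M \<or> u \<oplus> \<psi> e \<in> \<psi> ` ground M)"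
    using contract_simplification_iso_PG_iff[OF \<psi>] by (intro ball_cong) simp_all
  also have "\<dots> \<longleftrightarrow> (\<forall>p\<in>\<psi> ` ground M. \<forall>u\<in>PG_points (Suc r) - {p}. u \<in> \<psi> ` ground M \<or> u \<oplus> p \<in> \<psi> ` ground M)"
    by simp
  also have "\<dots> \<longleftrightarrow> sum_closed (PG_points (Suc r) - \<psi> ` ground M)"
    using PG_embeddingD(2)[OF \<psi>] by (intro sum_closed_complement_iff) blast
  finally show ?thesis .
qed

lemma iso_delete_flat_if_sum_closed:
  assumes \<psi>: "PG_embedding \<psi> M k" and "ground M \<noteq> {}"
    and closed: "sum_closed (PG_points k - \<psi> ` ground M)"
  obtains F where "flat (PG_rank k) F" "rk (PG_rank k) F < k" "iso M (delete (PG_rank k) F)"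
proof
  let ?F = "PG_points k - \<psi> ` ground M"
  show "flat (PG_rank k) ?F"
    using closed by (intro flat_PG_if_sum_closed) auto
  obtain e where "e \<in> ground M"
    using assms(2) by blast
  then show "rk (PG_rank k) ?F < k"
    using PG_embeddingD(2)[OF \<psi>] by (intro rk_PG_less_if_sum_closed[OF _ closed, of _ "\<psi> e"]) auto
  have "\<psi> ` ground M = PG_points k - ?F"
    using PG_embeddingD(2)[OF \<psi>] by (auto simp: Diff_Diff_Int)
  then show "iso M (delete (PG_rank k) ?F)"
    unfolding iso_delete_PG_iff using \<psi> by blast
qed

lemma sum_closed_complement_if_iso_delete_flat:
  assumes F: "flat (PG_rank k) F" and "iso M (delete (PG_rank k) F)"
  obtains \<psi> where "PG_embedding \<psi> M k" "sum_closed (PG_points k - \<psi> ` ground M)"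
proof -
  obtain \<psi> where \<psi>: "PG_embedding \<psi> M k" "\<psi> ` ground M = PG_points k - F"
    using assms(2) unfolding iso_delete_PG_iff by blast
  moreover have "PG_points k - \<psi> ` ground M = F"
    using F \<psi>(2) by (auto simp: flat_def ground_PG_rank)
  ultimately show thesis
    using that sum_closed_if_flat_PG[OF F] by simp
qed

theorem lemma3p2:
  fixes M :: "'a matroid" and r :: nat
  assumes "matroid M" and "simple M" and "binary M" and "rank M = r + 1"
  shows "(\<forall>e\<in>ground M. \<exists>S. is_simplification (contract M e) S \<and>
            iso (restrict (contract M e) S) (PG_rank r))
         \<longleftrightarrow>
         (\<exists>i\<in>{0..r}. \<exists>F. flat (PG_rank (r + 1)) F \<and> rk (PG_rank (r + 1)) F = r - i \<and>
            iso M (delete (PG_rank (r + 1)) F))"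
  unfolding Suc_eq_plus1[symmetric]
proof
  assume contractions: "\<forall>e\<in>ground M. \<exists>S. is_simplification (contract M e) S \<and>
      iso (restrict (contract M e) S) (PG_rank r)"
  obtain \<psi> where \<psi>: "PG_embedding \<psi> M (Suc r)"
    using binary_simple_PG_embedding[OF assms(1-3)] assms(4) by auto
  moreover have "ground M \<noteq> {}"
    using ground_nonempty_if_rank_pos[OF assms(1)] assms(4) by simp
  moreover have "sum_closed (PG_points (Suc r) - \<psi> ` ground M)"
    using contractions all_contract_simplification_iso_PG_iff[OF \<psi>] by blast
  ultimately obtain F where "flat (PG_rank (Suc r)) F" "rk (PG_rank (Suc r)) F < Suc r"
    "iso M (delete (PG_rank (Suc r)) F)"
    by (rule iso_delete_flat_if_sum_closed)
  then show "\<exists>i\<in>{0..r}. \<exists>F. flat (PG_rank (Suc r)) F \<and> rk (PG_rank (Suc r)) F = r - i \<and>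
      iso M (delete (PG_rank (Suc r)) F)"
    by (intro bexI[of _ "r - rk (PG_rank (Suc r)) F"] exI[of _ F]) auto
next
  assume "\<exists>i\<in>{0..r}. \<exists>F. flat (PG_rank (Suc r)) F \<and> rk (PG_rank (Suc r)) F = r - i \<and>
      iso M (delete (PG_rank (Suc r)) F)"
  then obtain F where "flat (PG_rank (Suc r)) F" "iso M (delete (PG_rank (Suc r)) F)"
    by blast
  then obtain \<psi> where "PG_embedding \<psi> M (Suc r)" "sum_closed (PG_points (Suc r) - \<psi> ` ground M)"
    by (rule sum_closed_complement_if_iso_delete_flat)
  then show "\<forall>e\<in>ground M. \<exists>S. is_simplification (contract M e) S \<and>
      iso (restrict (contract M e) S) (PG_rank r)"
    using all_contract_simplification_iso_PG_iff by blast
qed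

end
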